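(* Let $1\le m\le J$. Then (i) $|\hat\varphi_{[m],l}[n]|=|\hat\psi_{[m],l}[n]|$ for all $n$ and all $0\le l\le 2^m-1$; (ii) $\varphi_{[m],l}=H(\psi_{[m],l})$ whenever $1\le l\le 2^m-2$; (iii) for all $l,\lambda\in\{0,\dots,2^m-1\}$ and $p,s\in\{0,\dots,N/2^m-1\}$, $$\langle \varphi_{[m],l}[\cdot-2^m p],\,\varphi_{[m],\lambda}[\cdot-2^m s]\rangle=\delta_{l,\lambda}\,\delta_{p,s},$$ so $\{\varphi_{[m],l}[\cdot-2^m p]\}$ is an orthonormal basis of $\Pi[N]$.
   Context: Let $N=2^{J}$ with $J\ge 1$ an integer and $\omega=e^{2\pi i/N}$. $\Pi[N]$ denotes the real vector space of real-valued $N$-periodic sequences $x=\{x[k]\}_{k\in\mathbb Z}$, with inner product $\langle x,y\rangle=\sum_{k=0}^{N-1}x[k]y[k]$ and norm $\|x\|=\langle x,x\rangle^{1/2}$. The DFT of an $N$-periodic sequence is $\hat x[n]=\sum_{k=0}^{N-1}x[k]\omega^{-kn}$, with inverse $x[k]=\frac1N\sum_{n=0}^{N-1}\hat x[n]\omega^{kn}$. For $x\in\Pi[N]$, its discrete periodic Hilbert transform $H(x)\in\Pi[N]$ has DFT $\widehat{H(x)}[n]=-i\hat x[n]$ for $0<n<N/2$, $=i\hat x[n]$ for $N/2<n<N$, and $=0$ for $n\in\{0,N/2\}$ (indices mod $N$). Discrete-spline wavelet packets: fix an integer $r\ge1$; let $U[n]=\tfrac12\big(\cos^{4r}\tfrac{\pi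 n}{N}+\sin^{4r}\tfrac{\pi n}{N}\big)$, $\beta[n]=\cos^{2r}\tfrac{\pi n}{N}/\sqrt{U[n]}$, $\alpha[n]=\omega^{n}\sin^{2r}\tfrac{\pi n}{N}/\sqrt{U[n]}$, and $\gamma_0=\beta$, $\gamma_1=\alpha$. The wavelet packets $\psi_{[m],l}\in\Pi[N]$, $1\le m\le J$, $0\le l\le 2^m-1$, are defined by their DFTs: $\hat\psi_{[1],0}=\beta$, $\hat\psi_{[1],1}=\alpha$, and for $1\le m<J$, $\lambda\in\{0,\dots,2^m-1\}$, $\mu\in\{0,1\}$: $\hat\psi_{[m+1],\rho}[n]=\gamma_\mu[2^m n]\,\hat\psi_{[m],\lambda}[n]$, where $\rho=2\lambda+\mu$ if $\lambda$ is even and $\rho=2\lambda+1-\mu$ if $\lambda$ is odd. Known facts (may be assumed): for each $m$, $\{\psi_{[m],l}[\cdot-2^m p]:0\le l\le 2^m-1,\,0\le p<N/2^m\}$ is an orthonormal basis of $\Pi[N]$; $\hat\psi_{[m],l}[0]=0$ for $l\ne0$, and $\hat\psi_{[m],l}[N/2]=0$ for $l\neq 2^m-1$. Complementary wavelet packets: $\varphi_{[m],l}\in\Pi[N]$ is defined by its DFT $\hat\varphi_{[m],l}[n]=-i\hat\psi_{[m],l}[n]$ for $0<n<N/2$, $=i\hat\psi_{[m],l}[n]$ for $N/2<n<N$, and $=\hat\psi_{[m],l}[n]$ for $n\in\{0,N/2\}$. *)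

theory Defs
  imports "HOL-Analysis.Analysis"
begin

definition PiN :: "nat \<Rightarrow> (int \<Rightarrow> real) set" where
  "PiN N = {x. \<forall>k. x (k + int N) = x k}"

definition inner_N :: "nat \<Rightarrow> (int \<Rightarrow> real) \<Rightarrow> (int \<Rightarrow> real) \<Rightarrow> real" where
  "inner_N N x y = (\<Sum>k\<in>{0..<int N}. x k * y k)"

definition omega :: "nat \<Rightarrow> complex" where
  "omega N = cis (2 * pi / real N)"

definition dft :: "nat \<Rightarrow> (int \<Rightarrow> real) \<Rightarrow> int \<Rightarrow> complex" where
  "dft N x n = (\<Sum>k\<in>{0..<int N}. complex_of_real (x k) * omega N powi (- (k * n)))"

definition idft :: "nat \<Rightarrow> (int \<Rightarrow> complex) \<Rightarrow> int \<Rightarrow> complex" where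
  "idft N X k = (1 / of_nat N) * (\<Sum>n\<in>{0..<int N}. X n * omega N powi (k * n))"

definition hmult :: "nat \<Rightarrow> int \<Rightarrow> complex" where
  "hmult N n = (let j = n mod int N in
      if 0 < j \<and> 2 * j < int N then - \<i>
      else if int N < 2 * j \<and> j < int N then \<i> else 0)"

text \<open>H(x): the real sequence whose DFT is hmult * xhat (the inverse DFT is real for real x).\<close>
definition hilbert :: "nat \<Rightarrow> (int \<Rightarrow> real) \<Rightarrow> int \<Rightarrow> real" where
  "hilbert N x k = Re (idft N (\<lambda>n. hmult N n * dft N x n) k)"

definition U_fn :: "nat \<Rightarrow> nat \<Rightarrow> int \<Rightarrow> real" where
  "U_fn N r n = (cos (pi * n / N) ^ (4 * r) + sin (pi * n / N) ^ (4 * r)) / 2"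

definition beta_fn :: "nat \<Rightarrow> nat \<Rightarrow> int \<Rightarrow> complex" where
  "beta_fn N r n = complex_of_real (cos (pi * n / N) ^ (2 * r) / sqrt (U_fn N r n))"

definition alpha_fn :: "nat \<Rightarrow> nat \<Rightarrow> int \<Rightarrow> complex" where
  "alpha_fn N r n = omega N powi n * complex_of_real (sin (pi * n / N) ^ (2 * r) / sqrt (U_fn N r n))"

definition gamma_fn :: "nat \<Rightarrow> nat \<Rightarrow> nat \<Rightarrow> int \<Rightarrow> complex" where
  "gamma_fn N r \<mu> n = (if \<mu> = 0 then beta_fn N r n else alpha_fn N r n)"

text \<open>Level 0 is the constant 1 (only for l = 0),
  so that level 1 gives beta and alpha as in the paper; for m >= 1 the recursion is the paper's:
  rho = 2 lam + mu (lambda even), rho = 2 lam + 1 - mu (lambda odd).\<close>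
fun psihat :: "nat \<Rightarrow> nat \<Rightarrow> nat \<Rightarrow> nat \<Rightarrow> int \<Rightarrow> complex" where
  "psihat J r 0 l n = (if l = 0 then 1 else 0)"
| "psihat J r (Suc m) \<rho> n =
     (let lam = \<rho> div 2; \<mu> = (if even lam then \<rho> mod 2 else 1 - \<rho> mod 2)
      in gamma_fn (2 ^ J) r \<mu> (2 ^ m * n) * psihat J r m lam n)"

definition phihat :: "nat \<Rightarrow> nat \<Rightarrow> nat \<Rightarrow> nat \<Rightarrow> int \<Rightarrow> complex" where
  "phihat J r m l n = (let N = int (2 ^ J); j = n mod N in
      if 0 < j \<and> 2 * j < N then - \<i> * psihat J r m l n
      else if N < 2 * j \<and> j < N then \<i> * psihat J r m l n
      else psihat J r m l n)"

text \<open>The sequences themselves (real-valued; the inverse DFT is real since the DFT is Hermitian).\<close>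
definition psi :: "nat \<Rightarrow> nat \<Rightarrow> nat \<Rightarrow> nat \<Rightarrow> int \<Rightarrow> real" where
  "psi J r m l k = Re (idft (2 ^ J) (psihat J r m l) k)"

definition phi :: "nat \<Rightarrow> nat \<Rightarrow> nat \<Rightarrow> nat \<Rightarrow> int \<Rightarrow> real" where
  "phi J r m l k = Re (idft (2 ^ J) (phihat J r m l) k)"

end

theory Submission
  imports Defs "Jordan_Normal_Form.Determinant"
begin

text \<open>Everything is read off in the frequency domain. The complementary packets have DFT
  hilbert_phase * psihat with a phase of modulus one; this gives (i), and it gives (ii) because
  psihat vanishes at the frequencies 0 and N/2, the only ones where the phase differs from the
  Hilbert multiplier. For (iii), Plancherel turns the inner product of two shifted packets into
  a frequency sum in which the phase cancels. Splitting the frequencies into the cosets of the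
  subgroup of multiples of N/2^m, this sum factors into a character sum over Z/(N/2^m), which
  detects p = s, and an aliasing sum of psihat, which detects l = lambda; the latter is computed
  by induction on m from the quadrature mirror identity of (beta, alpha). Finally N orthonormal
  vectors of the N-dimensional space Pi[N] form a basis.\<close>

section \<open>Roots of unity and the periodic DFT\<close>

definition unit_root :: "nat \<Rightarrow> int \<Rightarrow> complex" where
  "unit_root N e = cis (2 * pi * of_int e / real N)"

lemma omega_powi_eq_unit_root: "omega N powi e = unit_root N e"
  unfolding omega_def unit_root_def cis_power_int by (simp add: field_simps)

lemma unit_root_add: "unit_root N (a + b) = unit_root N a * unit_root N b"
  unfolding unit_root_def cis_mult
  by (intro arg_cong[where f = cis]) (simp add: add_divide_distrib algebra_simps)

lemma cnj_unit_root: "cnj (unit_root N a) = unit_root N (- a)"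
  unfolding unit_root_def cis_cnj by simp

lemma unit_root_power: "unit_root N (d * int t) = unit_root N d ^ t"
  unfolding unit_root_def Complex.DeMoivre by (simp add: field_simps)

lemma unit_root_eq_1_iff:
  assumes "N > 0"
  shows "unit_root N d = 1 \<longleftrightarrow> int N dvd d"
proof
  assume "unit_root N d = 1"
  then obtain n where "2 * pi * of_int d / real N = real_of_int (2 * n) * pi"
    unfolding unit_root_def cis_conv_exp exp_eq_1 by auto
  then have "real_of_int d = real_of_int (int N * n)"
    using assms by (simp add: field_simps)
  then show "int N dvd d"
    by (metis dvd_triv_left of_int_eq_iff)
next
  assume "int N dvd d"
  then obtain k where "d = int N * k" by auto
  then have "2 * pi * of_int d / real N = 2 * pi * of_int k"
    using assms by simp
  then show "unit_root N d = 1"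
    unfolding unit_root_def by simp
qed

lemma unit_root_add_period: "N > 0 \<Longrightarrow> unit_root N (a + int N * k) = unit_root N a"
  using unit_root_eq_1_iff[of N "int N * k"] by (simp add: unit_root_add)

lemma sum_atLeastLessThan_int_eq_sum_lessThan:
  "(\<Sum>t\<in>{0..<int N}. f t) = (\<Sum>t<N. f (int t))"
proof -
  have "{0..<int N} = int ` {..<N}"
    by (simp add: image_int_atLeastLessThan lessThan_atLeast0)
  then show ?thesis by (simp add: sum.reindex)
qed

lemma sum_unit_root_mult:
  assumes "N > 0"
  shows "(\<Sum>t\<in>{0..<int N}. unit_root N (d * t)) = (if int N dvd d then of_nat N else 0)"
proof -
  have "(\<Sum>t\<in>{0..<int N}. unit_root N (d * t)) = (\<Sum>t<N. unit_root N d ^ t)"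
    by (simp add: sum_atLeastLessThan_int_eq_sum_lessThan unit_root_power)
  also have "\<dots> = (if int N dvd d then of_nat N else 0)"
  proof (cases "int N dvd d")
    case True
    then have "unit_root N d = 1" using unit_root_eq_1_iff[OF assms] by simp
    with True show ?thesis by simp
  next
    case False
    have "unit_root N d ^ N = 1"
      using unit_root_eq_1_iff[OF assms, of "d * int N"] by (simp flip: unit_root_power)
    with False show ?thesis
      using unit_root_eq_1_iff[OF assms] by (simp add: geometric_sum)
  qed
  finally show ?thesis .
qed

lemma dvd_diff_iff_eq:
  assumes "n \<in> {0..<int N}" "j \<in> {0..<int N}"
  shows "int N dvd (n - j) \<longleftrightarrow> j = n"
  using assms by (metis atLeastLessThan_iff mod_eq_dvd_iff mod_pos_pos_trivial)

definition periodic :: "nat \<Rightarrow> (int \<Rightarrow> 'a) \<Rightarrow> bool" where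
  "periodic N g \<longleftrightarrow> (\<forall>n. g (n + int N) = g n)"

lemma periodic_add_mult:
  assumes "periodic N g"
  shows "g (n + int N * k) = g n"
proof -
  have "g (n + int N * int k') = g n" for n k'
    using assms unfolding periodic_def
    by (induction k' arbitrary: n) (simp_all add: algebra_simps, metis add.assoc)
  from this[of n "nat k"] this[of "n + int N * k" "nat (- k)"] show ?thesis
    by (cases "k \<ge> 0") simp_all
qed

lemma periodic_mod:
  assumes "periodic N g"
  shows "g n = g (n mod int N)"
  using periodic_add_mult[OF assms, of "n mod int N" "n div int N"] by simp

lemma idft_unit_root: "idft N X k = (1 / of_nat N) * (\<Sum>n\<in>{0..<int N}. X n * unit_root N (k * n))"
  unfolding idft_def omega_powi_eq_unit_root by simp

lemma periodic_idft:
  assumes "N > 0"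
  shows "periodic N (idft N X)"
proof -
  have "unit_root N ((k + int N) * n) = unit_root N (k * n)" for k n
    using unit_root_add_period[OF assms, of "k * n" n] by (simp add: algebra_simps)
  then show ?thesis
    unfolding periodic_def idft_unit_root by simp
qed

lemma sum_idft_shift_mult_cnj:
  assumes "N > 0"
  shows "(\<Sum>k\<in>{0..<int N}. idft N X (k - a) * cnj (idft N Y (k - b)))
       = (1 / of_nat N) * (\<Sum>n\<in>{0..<int N}. X n * cnj (Y n) * unit_root N ((b - a) * n))"
proof -
  let ?I = "{0..<int N}"
  let ?c = "\<lambda>n j. (1 / of_nat N)^2 * (X n * cnj (Y j) * unit_root N (b * j - a * n))"
  have "(\<Sum>k\<in>?I. idft N X (k - a) * cnj (idft N Y (k - b)))
     = (\<Sum>k\<in>?I. \<Sum>n\<in>?I. \<Sum>j\<in>?I. ?c n j * unit_root N ((n - j) * k))"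
  proof (rule sum.cong[OF refl])
    fix k
    have phase: "unit_root N ((k - a) * n) * unit_root N (- ((k - b) * j))
        = unit_root N (b * j - a * n) * unit_root N ((n - j) * k)" for n j
      unfolding unit_root_add[symmetric] by (simp add: algebra_simps)
    have "idft N X (k - a) * cnj (idft N Y (k - b))
       = (1 / of_nat N) * (\<Sum>n\<in>?I. X n * unit_root N ((k - a) * n))
         * ((1 / of_nat N) * (\<Sum>j\<in>?I. cnj (Y j) * unit_root N (- ((k - b) * j))))"
      by (simp add: idft_unit_root cnj_sum cnj_unit_root)
    also have "\<dots> = (\<Sum>n\<in>?I. \<Sum>j\<in>?I. (1 / of_nat N)^2 * (X n * cnj (Y j))
           * (unit_root N ((k - a) * n) * unit_root N (- ((k - b) * j))))"
      by (subst sum.swap) (simp add: sum_product sum_distrib_left power2_eq_square mult_ac)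
    also have "\<dots> = (\<Sum>n\<in>?I. \<Sum>j\<in>?I. ?c n j * unit_root N ((n - j) * k))"
      by (simp only: phase, simp add: mult_ac)
    finally show "idft N X (k - a) * cnj (idft N Y (k - b))
        = (\<Sum>n\<in>?I. \<Sum>j\<in>?I. ?c n j * unit_root N ((n - j) * k))" .
  qed
  also have "\<dots> = (\<Sum>n\<in>?I. \<Sum>j\<in>?I. \<Sum>k\<in>?I. ?c n j * unit_root N ((n - j) * k))"
    by (subst sum.swap) (rule sum.cong[OF refl], rule sum.swap)
  also have "\<dots> = (\<Sum>n\<in>?I. \<Sum>j\<in>?I. ?c n j * (\<Sum>k\<in>?I. unit_root N ((n - j) * k)))"
    by (simp add: sum_distrib_left)
  also have "\<dots> = (\<Sum>n\<in>?I. \<Sum>j\<in>?I. if j = n then ?c n n * of_nat N else 0)"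
    by (intro sum.cong refl) (simp add: sum_unit_root_mult[OF assms] dvd_diff_iff_eq)
  also have "\<dots> = (1 / of_nat N) * (\<Sum>n\<in>?I. X n * cnj (Y n) * unit_root N ((b - a) * n))"
    using assms
    by (simp add: sum_distrib_left power2_eq_square left_diff_distrib right_diff_distrib mult_ac)
  finally show ?thesis .
qed

lemma sum_periodic_reflect:
  assumes "periodic N g"
  shows "(\<Sum>n\<in>{0..<int N}. g (- n)) = (\<Sum>n\<in>{0..<int N}. g n)"
proof -
  let ?h = "\<lambda>n. (- n) mod int N"
  have "(\<Sum>n\<in>{0..<int N}. g (- n)) = (\<Sum>n\<in>{0..<int N}. g (?h n))"
    using periodic_mod[OF assms] by simp
  also have "\<dots> = (\<Sum>n\<in>{0..<int N}. g n)"
  proof -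
    have "?h (?h a) = a" if "a \<in> {0..<int N}" for a
    proof -
      have "(- ((- a) mod int N)) mod int N = (- (- a)) mod int N"
        by (rule mod_minus_eq)
      with that show ?thesis by simp
    qed
    then show ?thesis
      by (intro sum.reindex_bij_witness[where i = ?h and j = ?h]) auto
  qed
  finally show ?thesis .
qed

definition hermitian :: "(int \<Rightarrow> complex) \<Rightarrow> bool" where
  "hermitian X \<longleftrightarrow> (\<forall>n. X (- n) = cnj (X n))"

lemma cnj_idft_hermitian:
  assumes "periodic N X" "hermitian X" "N > 0"
  shows "cnj (idft N X k) = idft N X k"
proof -
  let ?g = "\<lambda>n. X n * unit_root N (k * n)"
  have "unit_root N (k * (n + int N)) = unit_root N (k * n)" for n
    using unit_root_add_period[OF assms(3), of "k * n" k] by (simp add: algebra_simps)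
  then have "periodic N ?g"
    using assms(1) unfolding periodic_def by simp
  then have "(\<Sum>n\<in>{0..<int N}. ?g (- n)) = (\<Sum>n\<in>{0..<int N}. ?g n)"
    by (rule sum_periodic_reflect)
  then show ?thesis
    using assms(2) unfolding hermitian_def
    by (simp add: idft_unit_root cnj_sum cnj_unit_root)
qed

lemma of_real_Re_idft_hermitian:
  assumes "periodic N X" "hermitian X" "N > 0"
  shows "complex_of_real (Re (idft N X k)) = idft N X k"
  using cnj_idft_hermitian[OF assms, of k] by (simp add: complex_eq_iff)

lemma dft_Re_idft:
  assumes "periodic N X" "hermitian X" "N > 0"
  shows "dft N (\<lambda>k. Re (idft N X k)) n = X n"
proof -
  let ?I = "{0..<int N}"
  have "dft N (\<lambda>k. Re (idft N X k)) n = (\<Sum>k\<in>?I. idft N X k * unit_root N (- (k * n)))"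
    unfolding dft_def omega_powi_eq_unit_root of_real_Re_idft_hermitian[OF assms] ..
  also have "\<dots> = (\<Sum>k\<in>?I. \<Sum>j\<in>?I. (1 / of_nat N) * X j * unit_root N ((j - n) * k))"
    by (simp add: idft_unit_root sum_distrib_left sum_distrib_right unit_root_add[symmetric] algebra_simps)
  also have "\<dots> = (\<Sum>j\<in>?I. (1 / of_nat N) * X j * (\<Sum>k\<in>?I. unit_root N ((j - n) * k)))"
    by (subst sum.swap) (simp add: sum_distrib_left)
  also have "\<dots> = (\<Sum>j\<in>?I. if j = n mod int N then X j else 0)"
  proof (rule sum.cong[OF refl])
    fix j assume "j \<in> ?I"
    then have "int N dvd (j - n) \<longleftrightarrow> j = n mod int N"
      by (simp add: mod_eq_dvd_iff[symmetric])
    then show "(1 / of_nat N) * X j * (\<Sum>k\<in>?I. unit_root N ((j - n) * k))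
        = (if j = n mod int N then X j else 0)"
      using assms(3) by (simp add: sum_unit_root_mult)
  qed
  also have "\<dots> = X n"
    using assms(3) periodic_mod[OF assms(1)] by (simp add: sum.delta')
  finally show ?thesis .
qed

lemma of_real_inner_N_shift_Re_idft:
  assumes "periodic N X" "hermitian X" "periodic N Y" "hermitian Y" "N > 0"
  shows "complex_of_real (inner_N N (\<lambda>k. Re (idft N X (k - a))) (\<lambda>k. Re (idft N Y (k - b))))
       = (1 / of_nat N) * (\<Sum>n\<in>{0..<int N}. X n * cnj (Y n) * unit_root N ((b - a) * n))"
proof -
  have "complex_of_real (inner_N N (\<lambda>k. Re (idft N X (k - a))) (\<lambda>k. Re (idft N Y (k - b))))
      = (\<Sum>k\<in>{0..<int N}. idft N X (k - a) * cnj (idft N Y (k - b)))"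
    unfolding inner_N_def of_real_sum of_real_mult
      of_real_Re_idft_hermitian[OF assms(1,2,5)] of_real_Re_idft_hermitian[OF assms(3-5)]
    by (simp only: cnj_idft_hermitian[OF assms(3-5)])
  also have "\<dots> = (1 / of_nat N) * (\<Sum>n\<in>{0..<int N}. X n * cnj (Y n) * unit_root N ((b - a) * n))"
    by (rule sum_idft_shift_mult_cnj[OF assms(5)])
  finally show ?thesis .
qed

section \<open>The filters beta and alpha\<close>

lemma U_fn_pos: "0 < U_fn N r x"
proof -
  let ?t = "pi * real_of_int x / real N"
  have "cos ?t ^ (4 * r) \<ge> 0" "sin ?t ^ (4 * r) \<ge> 0"
    by (simp_all add: zero_le_even_power)
  moreover have "cos ?t \<noteq> 0 \<or> sin ?t \<noteq> 0"
    using sin_cos_squared_add[of ?t] by (auto simp del: sin_cos_squared_add)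
  then have "cos ?t ^ (4 * r) \<noteq> 0 \<or> sin ?t ^ (4 * r) \<noteq> 0"
    by auto
  ultimately show ?thesis
    unfolding U_fn_def by (smt (verit) divide_pos_pos)
qed

lemma angle_add_half_period:
  assumes "even N" "N > 0"
  shows "pi * real_of_int (x + int N div 2) / real N = pi * real_of_int x / real N + pi / 2"
  using assms by (auto simp: field_simps elim!: evenE)

lemma angle_add_period:
  "N > 0 \<Longrightarrow> pi * real_of_int (x + int N) / real N = pi * real_of_int x / real N + pi"
  by (simp add: field_simps)

lemma unit_root_half_period:
  assumes "even N" "N > 0"
  shows "unit_root N (int N div 2) = -1"
  using assms by (auto simp: unit_root_def elim!: evenE)

lemma U_fn_add_half_period:
  assumes "even N" "N > 0"
  shows "U_fn N r (x + int N div 2) = U_fn N r x"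
  unfolding U_fn_def angle_add_half_period[OF assms] by (simp add: cos_add sin_add add.commute)

lemma beta_fn_add_half_period:
  assumes "even N" "N > 0"
  shows "beta_fn N r (x + int N div 2)
       = complex_of_real (sin (pi * real_of_int x / real N) ^ (2 * r) / sqrt (U_fn N r x))"
  unfolding beta_fn_def U_fn_add_half_period[OF assms] angle_add_half_period[OF assms]
  by (simp add: cos_add)

lemma alpha_fn_eq:
  "alpha_fn N r x
     = unit_root N x * complex_of_real (sin (pi * real_of_int x / real N) ^ (2 * r) / sqrt (U_fn N r x))"
  unfolding alpha_fn_def omega_powi_eq_unit_root by simp

lemma alpha_fn_add_half_period:
  assumes "even N" "N > 0"
  shows "alpha_fn N r (x + int N div 2)
       = - unit_root N x
         * complex_of_real (cos (pi * real_of_int x / real N) ^ (2 * r) / sqrt (U_fn N r x))"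
  unfolding alpha_fn_eq U_fn_add_half_period[OF assms] unit_root_add unit_root_half_period[OF assms]
    angle_add_half_period[OF assms]
  by (simp add: sin_add)

lemma periodic_gamma_fn:
  assumes "N > 0"
  shows "periodic N (gamma_fn N r \<mu>)"
proof -
  have "U_fn N r (x + int N) = U_fn N r x" for x
    unfolding U_fn_def angle_add_period[OF assms] by simp
  moreover have "unit_root N (x + int N) = unit_root N x" for x
    using unit_root_add_period[OF assms, of x 1] by simp
  ultimately show ?thesis
    unfolding periodic_def gamma_fn_def beta_fn_def alpha_fn_eq angle_add_period[OF assms] by simp
qed

lemma hermitian_gamma_fn: "hermitian (gamma_fn N r \<mu>)"
proof -
  have "U_fn N r (- x) = U_fn N r x" for x
    unfolding U_fn_def by simp
  then show ?thesis
    unfolding hermitian_def gamma_fn_def beta_fn_def alpha_fn_eq by (simp add: cnj_unit_root)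
qed

lemma gamma_fn_quadrature_mirror:
  assumes "even N" "N > 0"
  shows "gamma_fn N r \<mu> x * cnj (gamma_fn N r \<mu>' x)
       + gamma_fn N r \<mu> (x + int N div 2) * cnj (gamma_fn N r \<mu>' (x + int N div 2))
       = (if (\<mu> = 0) = (\<mu>' = 0) then 2 else 0)"
proof -
  let ?t = "pi * real_of_int x / real N"
  define c where "c = cos ?t ^ (2 * r) / sqrt (U_fn N r x)"
  define s where "s = sin ?t ^ (2 * r) / sqrt (U_fn N r x)"
  define w where "w = unit_root N x"
  have cs: "complex_of_real c * complex_of_real c + complex_of_real s * complex_of_real s = 2"
  proof -
    let ?u = "U_fn N r x"
    have u: "(cos ?t ^ (2 * r))\<^sup>2 + (sin ?t ^ (2 * r))\<^sup>2 = 2 * ?u"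
      unfolding U_fn_def by (simp add: power_mult[symmetric] mult.commute)
    have "c * c + s * s = ((cos ?t ^ (2 * r))\<^sup>2 + (sin ?t ^ (2 * r))\<^sup>2) / ?u"
      using U_fn_pos[of N r x] unfolding c_def s_def by (simp add: field_simps power2_eq_square)
    also have "\<dots> = 2"
      using U_fn_pos[of N r x] unfolding u by simp
    finally show ?thesis by (metis of_real_add of_real_mult of_real_numeral)
  qed
  have w: "w * cnj w = 1"
    unfolding w_def cnj_unit_root unit_root_add[symmetric] by (simp add: unit_root_def)
  have g0: "gamma_fn N r 0 x = complex_of_real c"
    and g0h: "gamma_fn N r 0 (x + int N div 2) = complex_of_real s"
    and g1: "\<nu> \<noteq> 0 \<Longrightarrow> gamma_fn N r \<nu> x = w * complex_of_real s"
    and g1h: "\<nu> \<noteq> 0 \<Longrightarrow> gamma_fn N r \<nu> (x + int N div 2) = - w * complex_of_real c" for \<nu>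
    unfolding gamma_fn_def beta_fn_add_half_period[OF assms] alpha_fn_add_half_period[OF assms]
    by (simp_all add: beta_fn_def alpha_fn_eq c_def s_def w_def)
  have "w * complex_of_real s * cnj (w * complex_of_real s)
      + - w * complex_of_real c * cnj (- w * complex_of_real c)
      = (w * cnj w) * (complex_of_real c * complex_of_real c + complex_of_real s * complex_of_real s)"
    by (simp add: algebra_simps)
  then show ?thesis
    using cs w by (cases "\<mu> = 0"; cases "\<mu>' = 0") (simp_all add: g0 g0h g1 g1h algebra_simps)
qed

section \<open>Wavelet packets in the frequency domain\<close>

text \<open>Recovers mu from rho in the recursion rho = 2 lambda + mu (lambda even),
  rho = 2 lambda + 1 - mu (lambda odd).\<close>

definition filter_index :: "nat \<Rightarrow> nat" where
  "filter_index \<rho> = (if even (\<rho> div 2) then \<rho> mod 2 else 1 - \<rho> mod 2)"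

lemma filter_index_eq_0_iff_eq:
  assumes "\<rho> div 2 = \<rho>' div 2"
  shows "(filter_index \<rho> = 0 \<longleftrightarrow> filter_index \<rho>' = 0) \<longleftrightarrow> \<rho> = \<rho>'"
proof -
  have "\<rho> = \<rho>' \<longleftrightarrow> \<rho> mod 2 = \<rho>' mod 2"
    using assms by (metis div_mult_mod_eq)
  moreover have "\<rho> mod 2 < 2" "\<rho>' mod 2 < 2"
    by simp_all
  ultimately show ?thesis
    using assms unfolding filter_index_def by (cases "even (\<rho>' div 2)") auto
qed

lemma psihat_Suc:
  "psihat J r (Suc m) \<rho> n
     = gamma_fn (2 ^ J) r (filter_index \<rho>) (2 ^ m * n) * psihat J r m (\<rho> div 2) n"
  by (simp add: filter_index_def Let_def)

declare psihat.simps(2) [simp del]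

lemma periodic_psihat: "periodic (2 ^ J) (psihat J r m l)"
proof (induction m arbitrary: l)
  case 0
  then show ?case by (simp add: periodic_def)
next
  case (Suc m)
  have "gamma_fn (2 ^ J) r \<mu> (2 ^ m * (n + 2 ^ J)) = gamma_fn (2 ^ J) r \<mu> (2 ^ m * n)" for \<mu> n
    using periodic_add_mult[OF periodic_gamma_fn, of "2 ^ J" r \<mu> "2 ^ m * n" "2 ^ m"]
    by (simp add: algebra_simps)
  with Suc show ?case
    unfolding periodic_def by (simp add: psihat_Suc)
qed

lemma hermitian_psihat: "hermitian (psihat J r m l)"
proof (induction m arbitrary: l)
  case (Suc m)
  then show ?case
    using hermitian_gamma_fn unfolding hermitian_def by (simp add: psihat_Suc)
qed (simp add: hermitian_def)

lemma psihat_at_0: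
  assumes "1 \<le> r" "l \<noteq> 0"
  shows "psihat J r m l 0 = 0"
  using assms(2)
proof (induction m arbitrary: l)
  case (Suc m)
  show ?case
  proof (cases "l div 2 = 0")
    case True
    with Suc.prems have "filter_index l = 1"
      unfolding filter_index_def by auto
    with assms(1) show ?thesis
      by (simp add: psihat_Suc gamma_fn_def alpha_fn_def)
  qed (simp add: psihat_Suc Suc.IH)
qed simp

lemma psihat_at_half_period:
  assumes "1 \<le> r" "1 \<le> m" "m \<le> J" "l \<noteq> 2 ^ m - 1"
  shows "psihat J r m l (int (2 ^ J) div 2) = 0"
  using assms(2-4)
proof (induction m arbitrary: l)
  case (Suc m)
  let ?h = "int (2 ^ J) div 2"
  have J: "1 \<le> J" using Suc.prems by simp
  show ?case
  proof (cases "m = 0")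
    case True
    then have "l \<noteq> 1" using Suc.prems by simp
    show ?thesis
    proof (cases "l = 0")
      case True
      have "cos (pi * real_of_int ?h / real (2 ^ J :: nat)) = 0"
        using J by (cases J) simp_all
      with True \<open>m = 0\<close> assms(1) show ?thesis
        by (simp add: psihat_Suc filter_index_def gamma_fn_def beta_fn_def)
    next
      case False
      with \<open>l \<noteq> 1\<close> have "l div 2 \<noteq> 0" by auto
      with \<open>m = 0\<close> show ?thesis by (simp add: psihat_Suc)
    qed
  next
    case False
    show ?thesis
    proof (cases "l div 2 = 2 ^ m - 1")
      case True
      obtain k where k: "m = Suc k" using False by (cases m) auto
      have "odd (l div 2)"
        using True k by simp
      moreover have "l \<noteq> 2 * (l div 2) + 1"
      proof -
        have "(2::nat) ^ Suc m = 4 * 2 ^ k" "(2::nat) ^ m = 2 * 2 ^ k" "(1::nat) \<le> 2 ^ k"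
          using k by simp_all
        then show ?thesis using Suc.prems(3) True by linarith
      qed
      ultimately have "filter_index l = 1"
        unfolding filter_index_def by presburger
      moreover have "pi * real_of_int (2 ^ m * ?h) / real (2 ^ J :: nat) = real (2 ^ k) * pi"
        using J k by (cases J) (simp_all add: field_simps)
      ultimately show ?thesis
        using assms(1) sin_npi[of "2 ^ k"]
        by (simp add: psihat_Suc gamma_fn_def alpha_fn_def)
    next
      case False
      with \<open>m \<noteq> 0\<close> Suc show ?thesis by (simp add: psihat_Suc)
    qed
  qed
qed simp

lemma sum_lessThan_double: "(\<Sum>q<2 * (K::nat). f q) = (\<Sum>q<K. f (2 * q) + f (2 * q + 1))"
  by (induction K) (simp_all add: algebra_simps)

lemma psihat_Suc_alias:
  assumes "Suc m \<le> J"
  shows "psihat J r (Suc m) l (t + int (2 * q + e) * 2 ^ (J - Suc m))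
       = gamma_fn (2 ^ J) r (filter_index l) (2 ^ m * t + int e * (int (2 ^ J) div 2))
         * psihat J r m (l div 2) (t + int e * 2 ^ (J - Suc m) + int q * 2 ^ (J - m))"
proof -
  let ?N = "2 ^ J :: nat" and ?M = "(2::int) ^ (J - Suc m)"
  let ?y = "2 ^ m * t + int e * (int ?N div 2)"
  obtain d where "J = Suc m + d"
    using assms le_Suc_ex by blast
  then have M: "(2::int) ^ (J - m) = 2 * ?M" "(2::int) ^ m * ?M = int ?N div 2"
    "(2::int) ^ m * 2 ^ (J - m) = int ?N"
    by (simp_all add: power_add)
  have arg: "t + int (2 * q + e) * ?M = t + int e * ?M + int q * 2 ^ (J - m)"
    using M(1) by (simp add: algebra_simps)
  have "2 ^ m * (t + int e * ?M + int q * 2 ^ (J - m)) = ?y + int ?N * int q"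
    using M(2,3) by (simp add: algebra_simps flip: M(2,3))
  then have "gamma_fn ?N r (filter_index l) (2 ^ m * (t + int e * ?M + int q * 2 ^ (J - m)))
      = gamma_fn ?N r (filter_index l) ?y"
    using periodic_add_mult[OF periodic_gamma_fn[of ?N r "filter_index l"], of ?y "int q"] by simp
  then show ?thesis
    unfolding arg psihat_Suc by simp
qed

lemma sum_psihat_alias_mult_cnj:
  assumes "1 \<le> J" "m \<le> J" "l < 2 ^ m" "l' < 2 ^ m"
  shows "(\<Sum>q<2 ^ m. psihat J r m l (t + int q * 2 ^ (J - m))
                     * cnj (psihat J r m l' (t + int q * 2 ^ (J - m))))
       = (if l = l' then 2 ^ m else 0)"
  using assms(2-4)
proof (induction m arbitrary: l l' t)
  case (Suc m)
  let ?N = "2 ^ J :: nat"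
  let ?M = "(2::int) ^ (J - Suc m)"
  let ?g = "\<lambda>\<rho> y. gamma_fn ?N r (filter_index \<rho>) y"
  let ?y = "\<lambda>e::nat. 2 ^ m * t + int e * (int ?N div 2)"
  define S where "S e = (\<Sum>q<2 ^ m. psihat J r m (l div 2) (t + int e * ?M + int q * 2 ^ (J - m))
      * cnj (psihat J r m (l' div 2) (t + int e * ?M + int q * 2 ^ (J - m))))" for e :: nat
  have S: "S e = (if l div 2 = l' div 2 then 2 ^ m else 0)" for e
    unfolding S_def using Suc by (intro Suc.IH) auto
  have summand: "psihat J r (Suc m) l (t + int (2 * q + e) * ?M)
        * cnj (psihat J r (Suc m) l' (t + int (2 * q + e) * ?M))
      = ?g l (?y e) * cnj (?g l' (?y e))
        * (psihat J r m (l div 2) (t + int e * ?M + int q * 2 ^ (J - m))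
           * cnj (psihat J r m (l' div 2) (t + int e * ?M + int q * 2 ^ (J - m))))" for q e
    unfolding psihat_Suc_alias[OF Suc.prems(1)] by (simp add: mult_ac)
  have "(\<Sum>q<2 ^ Suc m. psihat J r (Suc m) l (t + int q * ?M)
                       * cnj (psihat J r (Suc m) l' (t + int q * ?M)))
      = ?g l (?y 0) * cnj (?g l' (?y 0)) * S 0 + ?g l (?y 1) * cnj (?g l' (?y 1)) * S 1"
    using summand[where e = 0] summand[where e = 1]
    by (simp add: sum_lessThan_double sum.distrib sum_distrib_left S_def del: of_nat_add)
  also have "\<dots> = (if l div 2 = l' div 2
      then 2 ^ m * (?g l (?y 0) * cnj (?g l' (?y 0)) + ?g l (?y 1) * cnj (?g l' (?y 1))) else 0)"
    unfolding S by (simp add: algebra_simps)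
  also have "\<dots> = (if l div 2 = l' div 2
      then 2 ^ m * (if (filter_index l = 0) = (filter_index l' = 0) then 2 else 0) else 0)"
    using gamma_fn_quadrature_mirror[of ?N] assms(1) by simp
  also have "\<dots> = (if l = l' then 2 ^ Suc m else 0)"
    using filter_index_eq_0_iff_eq[of l l'] by auto
  finally show ?case .
qed simp

section \<open>Complementary packets\<close>

text \<open>Agrees with hmult except at the frequencies 0 and N/2, where it is 1 instead of 0.\<close>

definition hilbert_phase :: "nat \<Rightarrow> int \<Rightarrow> complex" where
  "hilbert_phase N n = (let j = n mod int N in
      if 0 < j \<and> 2 * j < int N then - \<i> else if int N < 2 * j \<and> j < int N then \<i> else 1)"

lemma phihat_eq: "phihat J r m l n = hilbert_phase (2 ^ J) n * psihat J r m l n"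
  unfolding phihat_def hilbert_phase_def Let_def by simp

lemma hilbert_phase_mult_cnj: "hilbert_phase N n * cnj (hilbert_phase N n) = 1"
  unfolding hilbert_phase_def Let_def by simp

lemma norm_hilbert_phase: "cmod (hilbert_phase N n) = 1"
  unfolding hilbert_phase_def Let_def by simp

lemma hilbert_phase_uminus: "hilbert_phase N (- n) = cnj (hilbert_phase N n)"
  unfolding hilbert_phase_def Let_def zmod_zminus1_eq_if[of n]
  using pos_mod_bound[of "int N" n] pos_mod_sign[of "int N" n] by auto

lemma hilbert_phase_mult_eq_hmult_mult:
  assumes "N > 0" "periodic N X" "X 0 = 0" "X (int N div 2) = 0"
  shows "hilbert_phase N n * X n = hmult N n * X n"
proof (cases "n mod int N = 0 \<or> 2 * (n mod int N) = int N")
  case True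
  then have "n mod int N \<in> {0, int N div 2}"
    by auto
  then have "X n = 0"
    using assms(3,4) periodic_mod[OF assms(2), of n] by auto
  then show ?thesis by simp
next
  case False
  moreover have "0 \<le> n mod int N" "n mod int N < int N"
    using assms(1) by simp_all
  ultimately show ?thesis
    unfolding hilbert_phase_def hmult_def Let_def by auto
qed

lemma periodic_phihat: "periodic (2 ^ J) (phihat J r m l)"
  using periodic_psihat unfolding periodic_def phihat_eq hilbert_phase_def by simp

lemma hermitian_phihat: "hermitian (phihat J r m l)"
  using hermitian_psihat unfolding hermitian_def phihat_eq hilbert_phase_uminus by simp

lemma dft_psi: "dft (2 ^ J) (psi J r m l) n = psihat J r m l n"
  unfolding psi_def by (simp add: dft_Re_idft periodic_psihat hermitian_psihat)

lemma dft_phi: "dft (2 ^ J) (phi J r m l) n = phihat J r m l n"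
  unfolding phi_def by (simp add: dft_Re_idft periodic_phihat hermitian_phihat)

lemma norm_dft_phi: "cmod (dft (2 ^ J) (phi J r m l) n) = cmod (dft (2 ^ J) (psi J r m l) n)"
  unfolding dft_phi dft_psi phihat_eq norm_mult norm_hilbert_phase by simp

lemma phi_eq_hilbert_psi:
  assumes "1 \<le> r" "1 \<le> m" "m \<le> J" "1 \<le> l" "l \<le> 2 ^ m - 2"
  shows "phi J r m l = hilbert (2 ^ J) (psi J r m l)"
proof -
  have "(2::nat) \<le> 2 ^ m"
    using assms(2) power_increasing[of 1 m "2::nat"] by simp
  then have "l \<noteq> 2 ^ m - 1"
    using assms(5) by linarith
  then have "phihat J r m l = (\<lambda>n. hmult (2 ^ J) n * psihat J r m l n)"
    unfolding phihat_eq using assms(1-4)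
    by (intro ext hilbert_phase_mult_eq_hmult_mult periodic_psihat psihat_at_0 psihat_at_half_period)
      auto
  then show ?thesis
    unfolding phi_def hilbert_def dft_psi by simp
qed

lemma phi_shift_in_PiN: "(\<lambda>k. phi J r m l (k - a)) \<in> PiN (2 ^ J)"
proof -
  have "phi J r m l (k - a + int (2 ^ J)) = phi J r m l (k - a)" for k
    using periodic_idft[of "2 ^ J" "phihat J r m l"] unfolding phi_def periodic_def by simp
  then show ?thesis
    unfolding PiN_def by (simp add: diff_add_eq)
qed

section \<open>Orthonormality and completeness\<close>

lemma sum_atLeastLessThan_int_mult:
  "(\<Sum>n\<in>{0..<int (K * M)}. f n) = (\<Sum>t\<in>{0..<int M}. \<Sum>q<K. f (t + int q * int M))"
proof -
  have "(\<Sum>n\<in>{0..<int (K * M)}. f n) = (\<Sum>q<K. \<Sum>t<M. f (int (t + q * M)))"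
    unfolding sum_atLeastLessThan_int_eq_sum_lessThan by (rule sum_mult_product)
  also have "\<dots> = (\<Sum>t\<in>{0..<int M}. \<Sum>q<K. f (t + int q * int M))"
    unfolding sum_atLeastLessThan_int_eq_sum_lessThan by (subst sum.swap) simp
  finally show ?thesis .
qed

lemma unit_root_mult_cancel: "K > 0 \<Longrightarrow> unit_root (K * M) (int K * d) = unit_root M d"
  unfolding unit_root_def by (simp add: field_simps)

lemma of_real_inner_N_phi_shift:
  "complex_of_real (inner_N (2 ^ J) (\<lambda>k. phi J r m l (k - a)) (\<lambda>k. phi J r m l2 (k - b)))
     = (1 / 2 ^ J) * (\<Sum>n\<in>{0..<2 ^ J}. psihat J r m l n * cnj (psihat J r m l2 n)
         * unit_root (2 ^ J) ((b - a) * n))"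
proof -
  have "phihat J r m l n * cnj (phihat J r m l2 n)
      = hilbert_phase (2 ^ J) n * cnj (hilbert_phase (2 ^ J) n)
        * (psihat J r m l n * cnj (psihat J r m l2 n))" for n
    unfolding phihat_eq by (simp add: mult_ac)
  then have "phihat J r m l n * cnj (phihat J r m l2 n) = psihat J r m l n * cnj (psihat J r m l2 n)"
    for n
    unfolding hilbert_phase_mult_cnj by simp
  moreover have
    "complex_of_real (inner_N (2 ^ J) (\<lambda>k. phi J r m l (k - a)) (\<lambda>k. phi J r m l2 (k - b)))
      = (1 / of_nat (2 ^ J)) * (\<Sum>n\<in>{0..<int (2 ^ J)}. phihat J r m l n * cnj (phihat J r m l2 n)
          * unit_root (2 ^ J) ((b - a) * n))"
    unfolding phi_def
    by (intro of_real_inner_N_shift_Re_idft periodic_phihat hermitian_phihat) simp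
  ultimately show ?thesis
    by simp
qed

lemma inner_N_phi_shift:
  assumes "1 \<le> J" "m \<le> J" "l < 2 ^ m" "l2 < 2 ^ m" "p < 2 ^ J div 2 ^ m" "s < 2 ^ J div 2 ^ m"
  shows "inner_N (2 ^ J) (\<lambda>k. phi J r m l (k - 2 ^ m * int p))
                        (\<lambda>k. phi J r m l2 (k - 2 ^ m * int s))
       = (if l = l2 \<and> p = s then 1 else 0)"
proof -
  let ?N = "2 ^ J :: nat" and ?K = "2 ^ m :: nat" and ?M = "2 ^ (J - m) :: nat"
  let ?a = "(2::int) ^ m * int p" and ?b = "(2::int) ^ m * int s"
  let ?P = "\<lambda>l t q. psihat J r m l (t + int q * 2 ^ (J - m))"
  have NKM: "?N = ?K * ?M"
    using assms(2) by (simp flip: power_add)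
  have M: "2 ^ J div 2 ^ m = ?M"
    unfolding NKM by simp
  have blocks: "(\<Sum>n\<in>{0..<int ?N}. f n) = (\<Sum>t\<in>{0..<int ?M}. \<Sum>q<?K. f (t + int q * int ?M))"
    for f :: "int \<Rightarrow> complex"
    by (subst NKM) (rule sum_atLeastLessThan_int_mult)
  have phase: "unit_root ?N ((?b - ?a) * (t + int q * int ?M)) = unit_root ?M ((int s - int p) * t)"
    for t q
  proof -
    have "(?b - ?a) * (t + int q * int ?M)
        = int ?K * ((int s - int p) * t) + int ?N * ((int s - int p) * int q)"
      unfolding NKM by (simp add: algebra_simps)
    then show ?thesis
      using unit_root_add_period[of ?N] unit_root_mult_cancel[of ?K ?M] NKM by simp
  qed
  have "complex_of_real (inner_N ?N (\<lambda>k. phi J r m l (k - ?a)) (\<lambda>k. phi J r m l2 (k - ?b)))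
      = (1 / of_nat ?N) * (\<Sum>n\<in>{0..<int ?N}. psihat J r m l n * cnj (psihat J r m l2 n)
          * unit_root ?N ((?b - ?a) * n))"
    unfolding of_real_inner_N_phi_shift by simp
  also have "\<dots> = (1 / of_nat ?N) * (\<Sum>t\<in>{0..<int ?M}. unit_root ?M ((int s - int p) * t)
          * (\<Sum>q<?K. ?P l t q * cnj (?P l2 t q)))"
    unfolding blocks phase by (simp add: sum_distrib_left mult_ac)
  also have "\<dots> = (1 / of_nat ?N) * ((\<Sum>t\<in>{0..<int ?M}. unit_root ?M ((int s - int p) * t))
          * (if l = l2 then of_nat ?K else 0))"
    using sum_psihat_alias_mult_cnj[OF assms(1-4)] by (simp add: sum_distrib_right)
  also have "\<dots> = (if l = l2 \<and> p = s then 1 else 0)"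
    using dvd_diff_iff_eq[of "int s" ?M "int p"] sum_unit_root_mult[of ?M "int s - int p"] assms(5,6)
    unfolding M NKM by auto
  finally show ?thesis
    by (metis of_real_0 of_real_1 of_real_eq_iff)
qed

text \<open>The Gram identity V^T V = 1 for the square matrix V of samples forces V V^T = 1,
  which is the completeness relation behind the expansion.\<close>

lemma orthonormal_expansion_PiN:
  fixes w :: "nat \<Rightarrow> int \<Rightarrow> real"
  assumes "N > 0"
    and orth: "\<And>i j. i < N \<Longrightarrow> j < N \<Longrightarrow> inner_N N (w i) (w j) = (if i = j then 1 else 0)"
    and per: "\<And>j. j < N \<Longrightarrow> w j \<in> PiN N"
    and x: "x \<in> PiN N"
  shows "x k = (\<Sum>j<N. inner_N N (w j) x * w j k)"
proof -
  define V where "V = mat N N (\<lambda>(k, j). w j (int k))"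
  have V: "V \<in> carrier_mat N N" "transpose_mat V \<in> carrier_mat N N"
    unfolding V_def by simp_all
  have "transpose_mat V * V = 1\<^sub>m N"
  proof (rule eq_matI)
    fix i j assume "i < dim_row (1\<^sub>m N :: real mat)" "j < dim_col (1\<^sub>m N :: real mat)"
    then have ij: "i < N" "j < N" by simp_all
    have "(transpose_mat V * V) $$ (i, j) = inner_N N (w i) (w j)"
      using ij unfolding V_def inner_N_def sum_atLeastLessThan_int_eq_sum_lessThan
      by (simp add: scalar_prod_def lessThan_atLeast0)
    then show "(transpose_mat V * V) $$ (i, j) = 1\<^sub>m N $$ (i, j)"
      using orth[OF ij] ij by simp
  qed (use V in auto)
  then have "V * transpose_mat V = 1\<^sub>m N"
    by (rule mat_mult_left_right_inverse[OF V(2,1)])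
  then have dual: "(\<Sum>j<N. w j (int k) * w j (int k')) = (if k = k' then 1 else 0)"
    if "k < N" "k' < N" for k k'
  proof -
    have "(V * transpose_mat V) $$ (k, k') = (\<Sum>j<N. w j (int k) * w j (int k'))"
      using that unfolding V_def by (simp add: scalar_prod_def lessThan_atLeast0)
    with \<open>V * transpose_mat V = 1\<^sub>m N\<close> that show ?thesis by simp
  qed
  have expansion: "x (int k) = (\<Sum>j<N. inner_N N (w j) x * w j (int k))" if "k < N" for k
  proof -
    have "(\<Sum>j<N. inner_N N (w j) x * w j (int k))
        = (\<Sum>j<N. \<Sum>k'<N. x (int k') * (w j (int k) * w j (int k')))"
      unfolding inner_N_def sum_atLeastLessThan_int_eq_sum_lessThan sum_distrib_right
      by (simp add: mult_ac)
    also have "\<dots> = (\<Sum>k'<N. x (int k') * (\<Sum>j<N. w j (int k) * w j (int k')))"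
      by (subst sum.swap) (simp add: sum_distrib_left)
    also have "\<dots> = (\<Sum>k'<N. if k = k' then x (int k') else 0)"
      by (rule sum.cong[OF refl]) (use that in \<open>simp add: dual\<close>)
    also have "\<dots> = x (int k)"
      using that by simp
    finally show ?thesis ..
  qed
  have periodic_x: "periodic N x"
    using x unfolding PiN_def periodic_def by simp
  have periodic_w: "periodic N (w j)" if "j < N" for j
    using per[OF that] unfolding PiN_def periodic_def by simp
  define k0 where "k0 = nat (k mod int N)"
  have k0: "k0 < N" "int k0 = k mod int N"
    unfolding k0_def using \<open>N > 0\<close> by (simp_all add: nat_less_iff)
  have "x k = x (int k0)"
    unfolding k0(2) by (rule periodic_mod[OF periodic_x])
  also have "\<dots> = (\<Sum>j<N. inner_N N (w j) x * w j (int k0))"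
    by (rule expansion[OF k0(1)])
  also have "\<dots> = (\<Sum>j<N. inner_N N (w j) x * w j k)"
    unfolding k0(2) using periodic_mod[OF periodic_w, of _ k, symmetric] by simp
  finally show ?thesis .
qed

lemma PiN_expansion_phi_shift:
  assumes "1 \<le> J" "m \<le> J" "x \<in> PiN (2 ^ J)"
  shows "x = (\<lambda>k. \<Sum>l<2 ^ m. \<Sum>p<2 ^ J div 2 ^ m.
      inner_N (2 ^ J) (\<lambda>k. phi J r m l (k - 2 ^ m * int p)) x * phi J r m l (k - 2 ^ m * int p))"
proof -
  let ?M = "2 ^ J div 2 ^ m :: nat"
  define w where "w j = (\<lambda>k. phi J r m (j div ?M) (k - 2 ^ m * int (j mod ?M)))" for j
  have "?M = 2 ^ (J - m)"
    using assms(2) by (simp add: power_diff)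
  then have M: "?M > 0" "2 ^ m * ?M = (2::nat) ^ J"
    using assms(2) by (simp_all flip: power_add)
  have div: "i div ?M < 2 ^ m" if "i < 2 ^ J" for i
    using that M by (metis less_mult_imp_div_less mult.commute)
  have orth: "inner_N (2 ^ J) (w i) (w j) = (if i = j then 1 else 0)"
    if "i < 2 ^ J" "j < 2 ^ J" for i j
  proof -
    have "i div ?M = j div ?M \<and> i mod ?M = j mod ?M \<longleftrightarrow> i = j"
      by (metis div_mult_mod_eq)
    then show ?thesis
      unfolding w_def using inner_N_phi_shift[OF assms(1,2) div[OF that(1)] div[OF that(2)]] M(1)
      by simp
  qed
  have "x k = (\<Sum>j<2 ^ m * ?M. inner_N (2 ^ J) (w j) x * w j k)" for k
    unfolding M(2) using orth phi_shift_in_PiN assms(3) unfolding w_def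
    by (intro orthonormal_expansion_PiN) simp_all
  then show ?thesis
    by (simp add: fun_eq_iff sum_mult_product w_def)
qed

theorem proposition3p3:
  fixes J r m :: nat
  assumes "1 \<le> J" and "1 \<le> r" and "1 \<le> m" and "m \<le> J"
  shows "(\<forall>l < 2 ^ m. \<forall>n :: int.
            cmod (dft (2 ^ J) (phi J r m l) n) = cmod (dft (2 ^ J) (psi J r m l) n))
       \<and> (\<forall>l. 1 \<le> l \<and> l \<le> 2 ^ m - 2 \<longrightarrow> phi J r m l = hilbert (2 ^ J) (psi J r m l))
       \<and> (\<forall>l < 2 ^ m. \<forall>l2 < 2 ^ m. \<forall>p < 2 ^ J div 2 ^ m. \<forall>s < 2 ^ J div 2 ^ m.
            inner_N (2 ^ J) (\<lambda>k. phi J r m l (k - 2 ^ m * int p))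
                            (\<lambda>k. phi J r m l2 (k - 2 ^ m * int s))
            = (if l = l2 \<and> p = s then 1 else 0))
       \<and> (\<forall>l < 2 ^ m. \<forall>p < 2 ^ J div 2 ^ m.
            (\<lambda>k. phi J r m l (k - 2 ^ m * int p)) \<in> PiN (2 ^ J))
       \<and> (\<forall>x \<in> PiN (2 ^ J). \<exists>c :: nat \<Rightarrow> nat \<Rightarrow> real.
            x = (\<lambda>k. \<Sum>l < 2 ^ m. \<Sum>p < 2 ^ J div 2 ^ m. c l p * phi J r m l (k - 2 ^ m * int p)))"
proof (intro conjI allI impI ballI)
  fix x assume "x \<in> PiN (2 ^ J)"
  from PiN_expansion_phi_shift[OF assms(1,4) this, where r = r]
  show "\<exists>c. x = (\<lambda>k. \<Sum>l<2 ^ m. \<Sum>p<2 ^ J div 2 ^ m. c l p * phi J r m l (k - 2 ^ m * int p))"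
    by (rule exI[of _ "\<lambda>l p. inner_N (2 ^ J) (\<lambda>k. phi J r m l (k - 2 ^ m * int p)) x"])
qed (use assms in
  \<open>simp_all add: norm_dft_phi phi_eq_hilbert_psi inner_N_phi_shift phi_shift_in_PiN\<close>)

end
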